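(* Let $\{\mathbf Z_i(n), i\in\mathbb N\}$ be a critical GWBP/$\infty$ with mean matrix $\mathbf M\in\mathcal M_1$ and $\mathbf F(\mathbf s)\neq\mathbf M\mathbf s$. For $i\in\mathbb N$ and $\mathbf s\in\mathbf S$ define $\epsilon_{2,i}(\mathbf 1-\mathbf s)$ by $$\sum_{j\in\mathbb N}M_{ij}(1-s_j)-\sum_{j\in\mathbb N}Q_{ij}(s_j)=M_i\,\epsilon_{2,i}(\mathbf 1-\mathbf s).$$ Then $$\lim_{\mathbf s\in\mathbf S,\ \|\mathbf 1-\mathbf s\|_\infty\to0}\ \sup_{i\in\mathbb N}\frac{|\epsilon_{2,i}(\mathbf 1-\mathbf s)|}{\|\mathbf 1-\mathbf s\|_\infty}=0.$$ Moreover, with $\epsilon_{2,i}(\mathbf Q(n-1;\mathbf s))$ defined by $$\sum_{j\in\mathbb N}M_{ij}Q_j(n-1;\mathbf s)-\sum_{j\in\mathbb N}Q_{ij}\big(F_j(n-1;\mathbf s)\big)=M_i\,\epsilon_{2,i}(\mathbf Q(n-1;\mathbf s)),$$ one has $$\lim_{n\to\infty}\sup_{\mathbf s\in\mathbf S,\ i\in\mathbb N}\frac{|\epsilon_{2,i}(\mathbf Q(n-1;\mathbf s))|}{\mathcal Q(n-1;\mathbf s)}=0.$$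
   Context: A GWBP/$\infty$ has types $\mathbb N=\{1,2,\dots\}$. Each particle lives one unit of time; a type-$i$ particle produces, independently of everything else, a random vector $\mathbf Z_i=(Z_{ij})_{j\in\mathbb N}$ of children, with $Z_i:=\sum_jZ_{ij}<\infty$ a.s. $\mathbf Z_i(n)=(Z_{ij}(n))_j$ is the generation-$n$ population from one type-$i$ particle. For $\mathbf s\in[0,1]^{\mathbb N}$: $F_i(n;\mathbf s)=\mathbb E\prod_js_j^{Z_{ij}(n)}$, $F_i(\mathbf s)=F_i(1;\mathbf s)$, $Q_i(n;\mathbf s)=1-F_i(n;\mathbf s)$, $\mathbf Q(n;\mathbf s)=(Q_i(n;\mathbf s))_i$, $\mathcal Q(n;\mathbf s)=\sup_iQ_i(n;\mathbf s)$, $Q_{ij}(s)=1-\mathbb Es^{Z_{ij}}$ for $s\in[0,1]$, $\|\mathbf 1-\mathbf s\|_\infty=\sup_j(1-s_j)$. $\mathbf S=\{\mathbf s\in[0,1]^{\mathbb N}:\mathbf s\neq\mathbf 1\}$. "$\mathbf F(\mathbf s)\neq\mathbf M\mathbf s$" means it is not true that $F_i(\mathbf s)=\sum_jM_{ij}s_j$ for all $i,\mathbf s$. Mean matrix $\mathbf M=(M_{ij})$, $M_{ij}=\mathbb EZ_{ij}$, $M^{(n)}_{ij}=\mathbb EZ_{ij}(n)$, $M_i=\sum_jM_{ij}=\mathbb EZ_i$. Irreducible: for all $i,j$ some $M^{(n)}_{ij}>0$; aperiodic: gcd of such $n$ is 1; then $\lim_n(M^{(n)}_{ij})^{1/n}=1/R$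 for a common $R$; critical: $R=1$. $\mathbf M\in\mathcal M_1$ means: (i) irreducible, aperiodic, $R=1$, 1-recurrent ($\sum_nM^{(n)}_{ij}=\infty$) and 1-positive ($\lim_nM^{(n)}_{ij}>0$ for all $i,j$); then there are positive eigenvectors $\mathbf v\mathbf M=\mathbf v$, $\mathbf M\mathbf u^T=\mathbf u^T$, unique up to positive multiples, normalized with $\sum_jv_ju_j=1$; (ii) $\sum_jv_j=1$ and $\sup_iu_i<\infty$; (iii) $\lim_{N\to\infty}\sup_iM_i^{-1}\sum_{j>N}M_{ij}=0$ and $\lim_{K\to\infty}\sup_iM_i^{-1}\mathbb E[Z_i;Z_i>K]=0$. *)

theory Defs
  imports "HOL-Probability.Probability"
begin

text \<open>Types are labelled by nat (relabelling of the paper's index set {1,2,...}).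
  An offspring law is P :: nat => (nat => nat) pmf; P i is the law of the
  offspring vector Z_i = (Z_ij)_j of a type-i particle.\<close>

type_synonym offspring = "nat \<Rightarrow> (nat \<Rightarrow> nat) pmf"

definition supp :: "(nat \<Rightarrow> nat) \<Rightarrow> nat set" where
  "supp z = {j. z j \<noteq> 0}"

definition tot :: "(nat \<Rightarrow> nat) \<Rightarrow> nat" where
  "tot z = (\<Sum>j\<in>supp z. z j)"

definition GWBP :: "offspring \<Rightarrow> bool" where
  "GWBP P \<longleftrightarrow> (\<forall>i. \<forall>z\<in>set_pmf (P i). finite (supp z))"

definition unit_cube :: "(nat \<Rightarrow> real) set" where
  "unit_cube = {s. \<forall>j. 0 \<le> s j \<and> s j \<le> 1}"

definition Sset :: "(nat \<Rightarrow> real) set" where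
  "Sset = unit_cube - {(\<lambda>_. 1)}"

definition genF :: "offspring \<Rightarrow> nat \<Rightarrow> (nat \<Rightarrow> real) \<Rightarrow> real" where
  "genF P i s = measure_pmf.expectation (P i) (\<lambda>z. \<Prod>j\<in>supp z. s j ^ z j)"

primrec genFn :: "offspring \<Rightarrow> nat \<Rightarrow> (nat \<Rightarrow> real) \<Rightarrow> nat \<Rightarrow> real" where
  "genFn P 0 s = s"
| "genFn P (Suc n) s = (\<lambda>i. genF P i (genFn P n s))"

definition Qn :: "offspring \<Rightarrow> nat \<Rightarrow> (nat \<Rightarrow> real) \<Rightarrow> nat \<Rightarrow> real" where
  "Qn P n s i = 1 - genFn P n s i"

definition calQ :: "offspring \<Rightarrow> nat \<Rightarrow> (nat \<Rightarrow> real) \<Rightarrow> real" where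
  "calQ P n s = (SUP i. Qn P n s i)"

definition Qij :: "offspring \<Rightarrow> nat \<Rightarrow> nat \<Rightarrow> real \<Rightarrow> real" where
  "Qij P i j x = 1 - measure_pmf.expectation (P i) (\<lambda>z. x ^ z j)"

definition norm_inf :: "(nat \<Rightarrow> real) \<Rightarrow> real" where
  "norm_inf s = (SUP j. 1 - s j)"

definition Menn :: "offspring \<Rightarrow> nat \<Rightarrow> nat \<Rightarrow> ennreal" where
  "Menn P i j = (\<integral>\<^sup>+ z. of_nat (z j) \<partial>measure_pmf (P i))"

definition Mij :: "offspring \<Rightarrow> nat \<Rightarrow> nat \<Rightarrow> real" where
  "Mij P i j = enn2real (Menn P i j)"

definition Mtot_enn :: "offspring \<Rightarrow> nat \<Rightarrow> ennreal" where
  "Mtot_enn P i = (\<integral>\<^sup>+ z. of_nat (tot z) \<partial>measure_pmf (P i))"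

definition Mtot :: "offspring \<Rightarrow> nat \<Rightarrow> real" where
  "Mtot P i = enn2real (Mtot_enn P i)"

primrec Mpow :: "offspring \<Rightarrow> nat \<Rightarrow> nat \<Rightarrow> nat \<Rightarrow> ennreal" where
  "Mpow P 0 i j = (if i = j then 1 else 0)"
| "Mpow P (Suc n) i j = (\<Sum>k. Menn P i k * Mpow P n k j)"

definition irreducible_M :: "offspring \<Rightarrow> bool" where
  "irreducible_M P \<longleftrightarrow> (\<forall>i j. \<exists>n\<ge>1. Mpow P n i j > 0)"

definition aperiodic_M :: "offspring \<Rightarrow> bool" where
  "aperiodic_M P \<longleftrightarrow> (\<forall>i. Gcd {n. n \<ge> 1 \<and> Mpow P n i i > 0} = 1)"

text \<open>Convergence parameter R = 1: lim_n (M^{(n)}_ij)^{1/n} = 1 (in [0,\<infinity>]; a limit 1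
  forces M^{(n)}_ij to be eventually finite).\<close>
definition R_one :: "offspring \<Rightarrow> bool" where
  "R_one P \<longleftrightarrow> (\<forall>i j. (\<forall>\<^sub>F n in sequentially. Mpow P n i j < \<infinity>) \<and>
      (\<lambda>n. root n (enn2real (Mpow P n i j))) \<longlonglongrightarrow> 1)"

definition one_recurrent :: "offspring \<Rightarrow> bool" where
  "one_recurrent P \<longleftrightarrow> (\<forall>i j. (\<Sum>n. Mpow P n i j) = \<infinity>)"

definition one_positive :: "offspring \<Rightarrow> bool" where
  "one_positive P \<longleftrightarrow> (\<forall>i j. \<exists>L::real. L > 0 \<and>
      (\<forall>\<^sub>F n in sequentially. Mpow P n i j < \<infinity>) \<and>
      (\<lambda>n. enn2real (Mpow P n i j)) \<longlonglongrightarrow> L)"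

definition left_eigen :: "offspring \<Rightarrow> (nat \<Rightarrow> real) \<Rightarrow> bool" where
  "left_eigen P v \<longleftrightarrow> (\<forall>j. (\<Sum>i. ennreal (v i) * Menn P i j) = ennreal (v j))"

definition right_eigen :: "offspring \<Rightarrow> (nat \<Rightarrow> real) \<Rightarrow> bool" where
  "right_eigen P u \<longleftrightarrow> (\<forall>i. (\<Sum>j. Menn P i j * ennreal (u j)) = ennreal (u i))"

text \<open>Condition (ii) is stated for
  the (unique up to scaling) positive eigenvectors normalised by sum_j v_j u_j = 1.
  Condition (iii) presupposes finite means M_i (the paper divides by M_i), made explicit.\<close>
definition M1 :: "offspring \<Rightarrow> bool" where
  "M1 P \<longleftrightarrow>
     irreducible_M P \<and> aperiodic_M P \<and> R_one P \<and> one_recurrent P \<and> one_positive P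
   \<and> (\<exists>v u. (\<forall>j. v j > 0) \<and> (\<forall>j. u j > 0) \<and> left_eigen P v \<and> right_eigen P u
        \<and> (\<lambda>j. v j * u j) sums 1
        \<and> v sums 1 \<and> bdd_above (range u))
   \<and> (\<forall>i. Mtot_enn P i < \<infinity>)
   \<and> (\<forall>e>0. \<exists>N0. \<forall>N\<ge>N0. \<forall>i. (\<Sum>k. Mij P i (k + N + 1)) / Mtot P i \<le> e)
   \<and> (\<forall>e>0. \<exists>K0. \<forall>K\<ge>K0. \<forall>i.
        enn2real (\<integral>\<^sup>+ z. of_nat (tot z) * indicator {z. tot z > K} z \<partial>measure_pmf (P i))
          / Mtot P i \<le> e)"

definition F_linear :: "offspring \<Rightarrow> bool" where
  "F_linear P \<longleftrightarrow> (\<forall>i. \<forall>s\<in>unit_cube. genF P i s = (\<Sum>j. Mij P i j * s j))"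

text \<open>eps_{2,i}(1 - s), defined by
  sum_j M_ij (1 - s_j) - sum_j Q_ij(s_j) = M_i eps_{2,i}(1 - s).
  Evaluated at s = F(n-1;s) this gives eps_{2,i}(Q(n-1;s)).\<close>
definition eps2 :: "offspring \<Rightarrow> nat \<Rightarrow> (nat \<Rightarrow> real) \<Rightarrow> real" where
  "eps2 P i s = ((\<Sum>j. Mij P i j * (1 - s j)) - (\<Sum>j. Qij P i j (s j))) / Mtot P i"

end

theory Submission
  imports Defs
begin

text \<open>
  For an offspring vector z put D(s, z) = sum_j (z_j (1 - s_j) - (1 - s_j ^ z_j)), so that
  M_i eps_2,i(1 - s) is the expectation of D(s, Z_i). Termwise
  0 <= k (1 - x) - (1 - x ^ k) <= min (k (1 - x)) (k^2 (1 - x)^2), hence with d = ||1 - s||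
  one gets D(s, z) <= d |z| [|z| > K] + d^2 K |z|, and the uniform integrability in (iii)
  makes the first term small relative to M_i uniformly in i.

  For the second, eps_2,i(Q(n - 1; s)) is eps_2,i evaluated at F(n - 1; s), and
  ||1 - F(n - 1; s)|| = calQ(n - 1; s) <= sup_i (1 - F_i(n - 1; 0)), so it suffices that
  F(n; 0) -> 1 uniformly. The increasing limit p of F(n; 0) is a fixed point of F. If p <> 1,
  pairing M(1 - p) >= 1 - p with the summable left eigenvector v turns it into an equality,
  irreducibility makes 1 - p positive, and equality in
  1 - prod_j p_j ^ z_j <= sum_j z_j (1 - p_j) then allows at most one child per particle;
  v forces exactly one, i.e. F(s) = M s, which is excluded. Uniformity follows from the
  uniform tail condition in (iii) and the boundedness of the M_i, which comes from the bounded
  right eigenvector u.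
\<close>

lemma ennreal_suminf_swap:
  fixes f :: "nat \<Rightarrow> nat \<Rightarrow> ennreal"
  shows "(\<Sum>i. \<Sum>j. f i j) = (\<Sum>j. \<Sum>i. f i j)"
proof -
  have "(\<Sum>i. \<Sum>j. f i j) = (\<integral>\<^sup>+ i. (\<Sum>j. f i j) \<partial>count_space UNIV)"
    by (simp add: nn_integral_count_space_nat)
  also have "\<dots> = (\<Sum>j. \<integral>\<^sup>+ i. f i j \<partial>count_space UNIV)"
    by (rule nn_integral_suminf) simp
  also have "\<dots> = (\<Sum>j. \<Sum>i. f i j)"
    by (simp add: nn_integral_count_space_nat)
  finally show ?thesis .
qed

lemma sums_if_ennreal_suminf_eq:
  fixes f :: "nat \<Rightarrow> real"
  assumes f: "\<And>i. 0 \<le> f i" and eq: "(\<Sum>i. ennreal (f i)) = ennreal s" and "0 \<le> s"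
  shows "f sums s"
proof -
  have "summable f"
    using eq by (intro summable_suminf_not_top[OF f]) simp
  then have "ennreal (\<Sum>i. f i) = ennreal s"
    using eq suminf_ennreal2[OF f] by simp
  then have "(\<Sum>i. f i) = s"
    using suminf_nonneg[OF \<open>summable f\<close> f] \<open>0 \<le> s\<close> by simp
  then show ?thesis
    using summable_sums[OF \<open>summable f\<close>] by simp
qed

lemma sums_eq_if_le:
  fixes f g :: "nat \<Rightarrow> real"
  assumes "f sums s" and "g sums s" and "\<And>i. f i \<le> g i"
  shows "f = g"
proof
  fix i
  have "(\<lambda>i. g i - f i) sums 0"
    using sums_diff[OF assms(2,1)] by simp
  then have "g i - f i = 0"
    using suminf_eq_zero_iff[of "\<lambda>i. g i - f i"] assms(3) by (auto simp: sums_iff)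
  then show "f i = g i" by simp
qed

lemma pmf_integral_eq_0_imp_eq_0:
  fixes f :: "'a \<Rightarrow> real"
  assumes "integrable (measure_pmf p) f" and "\<And>z. z \<in> set_pmf p \<Longrightarrow> 0 \<le> f z"
    and "(\<integral>z. f z \<partial>p) = 0" and "z \<in> set_pmf p"
  shows "f z = 0"
  using integral_nonneg_eq_0_iff_AE[OF assms(1)] assms(2-4) by (auto simp: AE_measure_pmf_iff)

lemma one_minus_power_le:
  fixes x :: real
  assumes "0 \<le> x" "x \<le> 1"
  shows "1 - x ^ k \<le> real k * (1 - x)"
proof (induction k)
  case 0
  then show ?case by simp
next
  case (Suc k)
  have "1 - x ^ Suc k = (1 - x ^ k) + x ^ k * (1 - x)"
    by (simp add: algebra_simps)
  also have "\<dots> \<le> real k * (1 - x) + 1 * (1 - x)"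
    using Suc assms by (intro add_mono mult_right_mono) (auto simp: power_le_one)
  finally show ?case by (simp add: algebra_simps)
qed

lemma one_minus_power_less:
  fixes x :: real
  assumes "0 \<le> x" "x < 1" "2 \<le> k"
  shows "1 - x ^ k < real k * (1 - x)"
  using assms(3)
proof (induction k rule: dec_induct)
  case base
  have "1 - x ^ 2 = (1 - x) + x * (1 - x)"
    by (simp add: algebra_simps power2_eq_square)
  also have "\<dots> < (1 - x) + 1 * (1 - x)"
    using assms by (intro add_strict_left_mono mult_strict_right_mono) auto
  finally show ?case by simp
next
  case (step k)
  have "1 - x ^ Suc k = (1 - x ^ k) + x ^ k * (1 - x)"
    by (simp add: algebra_simps)
  also have "\<dots> < real k * (1 - x) + 1 * (1 - x)"
    using step.IH assms by (intro add_less_le_mono mult_right_mono) (auto simp: power_le_one)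
  finally show ?case by (simp add: algebra_simps)
qed

lemma power_defect_le:
  fixes x :: real
  assumes "0 \<le> x" "x \<le> 1"
  shows "real k * (1 - x) - (1 - x ^ k) \<le> (real k)\<^sup>2 * (1 - x)\<^sup>2"
proof (induction k)
  case 0
  then show ?case by simp
next
  case (Suc k)
  have "real (Suc k) * (1 - x) - (1 - x ^ Suc k)
      = (real k * (1 - x) - (1 - x ^ k)) + (1 - x) * (1 - x ^ k)"
    by (simp add: algebra_simps)
  also have "\<dots> \<le> (real k)\<^sup>2 * (1 - x)\<^sup>2 + (1 - x) * (real k * (1 - x))"
    using Suc one_minus_power_le[OF assms, of k] assms by (intro add_mono mult_left_mono) auto
  also have "\<dots> = ((real k)\<^sup>2 + real k) * (1 - x)\<^sup>2"
    by (simp add: power2_eq_square algebra_simps)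
  also have "\<dots> \<le> (real (Suc k))\<^sup>2 * (1 - x)\<^sup>2"
    by (rule mult_right_mono) (simp add: power2_eq_square algebra_simps, simp)
  finally show ?case .
qed

lemma one_minus_prod_le_sum:
  fixes a :: "nat \<Rightarrow> real"
  assumes "finite A" "\<And>j. j \<in> A \<Longrightarrow> 0 \<le> a j \<and> a j \<le> 1"
  shows "1 - (\<Prod>j\<in>A. a j) \<le> (\<Sum>j\<in>A. 1 - a j)"
  using assms
proof (induction A rule: finite_induct)
  case empty
  show ?case by simp
next
  case (insert b A)
  have A: "0 \<le> (\<Prod>j\<in>A. a j)" "(\<Prod>j\<in>A. a j) \<le> 1" "1 - (\<Prod>j\<in>A. a j) \<le> (\<Sum>j\<in>A. 1 - a j)"
    using insert by (auto intro!: prod_nonneg prod_le_1)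
  have b: "0 \<le> a b" "a b \<le> 1"
    using insert by auto
  have "1 - (\<Prod>j\<in>insert b A. a j) = (1 - a b) + a b * (1 - (\<Prod>j\<in>A. a j))"
    using insert by (simp add: algebra_simps)
  also have "\<dots> \<le> (1 - a b) + 1 * (\<Sum>j\<in>A. 1 - a j)"
    using A b by (intro add_left_mono mult_mono) auto
  finally show ?case
    using insert by simp
qed

lemma one_minus_prod_le_sum_minus_pair:
  fixes a :: "nat \<Rightarrow> real"
  assumes "finite A" "\<And>j. j \<in> A \<Longrightarrow> 0 \<le> a j \<and> a j \<le> 1" "j1 \<in> A" "j2 \<in> A" "j1 \<noteq> j2"
  shows "1 - (\<Prod>j\<in>A. a j) \<le> (\<Sum>j\<in>A. 1 - a j) - (1 - a j1) * (1 - a j2)"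
proof -
  define R where "R = A - {j1, j2}"
  have A: "A = insert j1 (insert j2 R)" "j1 \<notin> insert j2 R" "j2 \<notin> R" "finite R"
    using assms unfolding R_def by auto
  have R: "1 - (\<Prod>j\<in>R. a j) \<le> (\<Sum>j\<in>R. 1 - a j)"
    by (rule one_minus_prod_le_sum[OF A(4)]) (use assms A in auto)
  have "0 \<le> (\<Prod>j\<in>R. a j)" "(\<Prod>j\<in>R. a j) \<le> 1"
    using assms A by (auto intro!: prod_nonneg prod_le_1)
  then have "a j1 * a j2 * (1 - (\<Prod>j\<in>R. a j)) \<le> 1 * (1 - (\<Prod>j\<in>R. a j))"
    using assms by (intro mult_right_mono) (auto simp: mult_le_one)
  then show ?thesis
    using A R by (simp add: algebra_simps)
qed

lemma GWBP_finite_supp: "GWBP P \<Longrightarrow> z \<in> set_pmf (P i) \<Longrightarrow> finite (supp z)"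
  by (auto simp: GWBP_def)

lemma le_tot: "finite (supp z) \<Longrightarrow> z j \<le> tot z"
  unfolding tot_def by (cases "j \<in> supp z") (auto simp: supp_def intro!: member_le_sum)

lemma sum_supp_le_tot:
  fixes f :: "nat \<Rightarrow> real"
  assumes "\<And>j. 0 \<le> f j \<and> f j \<le> real (z j)"
  shows "0 \<le> (\<Sum>j\<in>supp z. f j)" and "(\<Sum>j\<in>supp z. f j) \<le> real (tot z)"
proof -
  show "0 \<le> (\<Sum>j\<in>supp z. f j)"
    using assms by (simp add: sum_nonneg)
  have "(\<Sum>j\<in>supp z. f j) \<le> (\<Sum>j\<in>supp z. real (z j))"
    using assms by (intro sum_mono) auto
  then show "(\<Sum>j\<in>supp z. f j) \<le> real (tot z)"
    by (simp add: tot_def)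
qed

lemma tot_eq_1_imp_singleton:
  assumes "finite (supp z)" and "tot z = 1"
  obtains k where "supp z = {k}" and "z k = 1"
proof -
  obtain k where k: "k \<in> supp z"
    using assms(2) by (fastforce simp: tot_def)
  have "z k \<ge> 1"
    using k by (simp add: supp_def)
  then have zk: "z k = 1"
    using le_tot[OF assms(1), of k] assms(2) by simp
  have "supp z = {k}"
  proof (rule ccontr)
    assume "supp z \<noteq> {k}"
    then obtain k' where k': "k' \<in> supp z" "k' \<noteq> k"
      using k by blast
    have "(\<Sum>j\<in>{k, k'}. z j) \<le> tot z"
      unfolding tot_def using k k' assms(1) by (intro sum_mono2) auto
    then show False
      using zk k' assms(2) by (simp add: supp_def)
  qed
  then show ?thesis
    using zk that by blast
qed

definition linearisation_defect :: "(nat \<Rightarrow> real) \<Rightarrow> (nat \<Rightarrow> nat) \<Rightarrow> real" where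
  "linearisation_defect s z =
     (\<Sum>j\<in>supp z. real (z j) * (1 - s j)) - (1 - (\<Prod>j\<in>supp z. s j ^ z j))"

lemma linearisation_defect_nonneg:
  assumes "finite (supp z)" and "\<And>j. 0 \<le> s j \<and> s j \<le> 1"
  shows "0 \<le> linearisation_defect s z"
proof -
  have "1 - (\<Prod>j\<in>supp z. s j ^ z j) \<le> (\<Sum>j\<in>supp z. 1 - s j ^ z j)"
    by (rule one_minus_prod_le_sum[OF assms(1)]) (use assms(2) in \<open>auto intro: power_le_one\<close>)
  also have "\<dots> \<le> (\<Sum>j\<in>supp z. real (z j) * (1 - s j))"
    by (rule sum_mono) (use one_minus_power_le assms(2) in auto)
  finally show ?thesis
    by (simp add: linearisation_defect_def)
qed

lemma linearisation_defect_pos_if_multiple_child: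
  assumes f: "finite (supp z)" and s: "\<And>k. 0 \<le> s k \<and> s k < 1"
    and k: "k \<in> supp z" "2 \<le> z k"
  shows "0 < linearisation_defect s z"
proof -
  have "1 - (\<Prod>j\<in>supp z. s j ^ z j) \<le> (\<Sum>j\<in>supp z. 1 - s j ^ z j)"
    by (rule one_minus_prod_le_sum[OF f]) (use s in \<open>auto intro: power_le_one less_imp_le\<close>)
  also have "\<dots> < (\<Sum>j\<in>supp z. real (z j) * (1 - s j))"
  proof (rule sum_strict_mono_ex1[OF f])
    show "\<forall>j\<in>supp z. 1 - s j ^ z j \<le> real (z j) * (1 - s j)"
      using one_minus_power_le s by (simp add: less_imp_le)
    show "\<exists>j\<in>supp z. 1 - s j ^ z j < real (z j) * (1 - s j)"
      using one_minus_power_less[of "s k" "z k"] s[of k] k by blast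
  qed
  finally show ?thesis
    by (simp add: linearisation_defect_def)
qed

lemma linearisation_defect_pos_if_two_children:
  assumes f: "finite (supp z)" and s: "\<And>k. 0 \<le> s k \<and> s k < 1"
    and k: "k1 \<in> supp z" "k2 \<in> supp z" "k1 \<noteq> k2"
  shows "0 < linearisation_defect s z"
proof -
  let ?a = "\<lambda>j. s j ^ z j"
  have "1 - (\<Prod>j\<in>supp z. ?a j) \<le> (\<Sum>j\<in>supp z. 1 - ?a j) - (1 - ?a k1) * (1 - ?a k2)"
    by (rule one_minus_prod_le_sum_minus_pair[OF f _ k]) (use s in \<open>auto intro: power_le_one less_imp_le\<close>)
  moreover have "?a k < 1" if "k \<in> supp z" for k
    using that s[of k] by (simp add: supp_def power_less_one_iff)
  then have "0 < (1 - ?a k1) * (1 - ?a k2)"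
    using k by simp
  moreover have "(\<Sum>j\<in>supp z. 1 - ?a j) \<le> (\<Sum>j\<in>supp z. real (z j) * (1 - s j))"
    using one_minus_power_le s by (intro sum_mono) (simp add: less_imp_le)
  ultimately show ?thesis
    by (simp add: linearisation_defect_def)
qed

lemma linearisation_defect_eq_0_imp_tot_le_1:
  assumes f: "finite (supp z)" and s: "\<And>k. 0 \<le> s k \<and> s k < 1"
    and D: "linearisation_defect s z = 0"
  shows "tot z \<le> 1"
proof (rule ccontr)
  assume "\<not> tot z \<le> 1"
  show False
  proof (cases "\<exists>k\<in>supp z. 2 \<le> z k")
    case True
    then obtain k where "k \<in> supp z" "2 \<le> z k"
      by blast
    then show False
      using linearisation_defect_pos_if_multiple_child[where s = s, OF f s] D by simp
  next
    case False
    have "z k = 1" if "k \<in> supp z" for k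
    proof -
      have "z k \<noteq> 0"
        using that by (simp add: supp_def)
      moreover have "\<not> 2 \<le> z k"
        using that False by blast
      ultimately show ?thesis by linarith
    qed
    then have "card (supp z) = tot z"
      by (simp add: tot_def)
    then obtain k1 k2 where "k1 \<in> supp z" "k2 \<in> supp z" "k1 \<noteq> k2"
      using \<open>\<not> tot z \<le> 1\<close> f by (metis One_nat_def card_le_Suc0_iff_eq not_less_eq_eq)
    then show False
      using linearisation_defect_pos_if_two_children[where s = s, OF f s] D by simp
  qed
qed

lemma Mtot_eq_integral: "Mtot P i = (\<integral>z. real (tot z) \<partial>P i)"
  unfolding Mtot_def Mtot_enn_def
  by (rule enn2real_nn_integral_eq_integral) (simp_all add: ennreal_of_nat_eq_real_of_nat)

lemma Mij_eq_integral: "Mij P i j = (\<integral>z. real (z j) \<partial>P i)"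
  unfolding Mij_def Menn_def
  by (rule enn2real_nn_integral_eq_integral) (simp_all add: ennreal_of_nat_eq_real_of_nat)

lemma Mij_nonneg: "0 \<le> Mij P i j"
  by (simp add: Mij_def)

lemma Mtot_nonneg: "0 \<le> Mtot P i"
  by (simp add: Mtot_def)

lemma integrable_tot:
  assumes "Mtot_enn P i < \<infinity>"
  shows "integrable (measure_pmf (P i)) (\<lambda>z. real (tot z))"
  by (rule integrableI_bounded) (use assms in \<open>simp_all add: Mtot_enn_def ennreal_of_nat_eq_real_of_nat\<close>)

lemma integrable_le_tot:
  fixes f :: "(nat \<Rightarrow> nat) \<Rightarrow> real"
  assumes "Mtot_enn P i < \<infinity>" and "\<And>z. z \<in> set_pmf (P i) \<Longrightarrow> \<bar>f z\<bar> \<le> real (tot z)"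
  shows "integrable (measure_pmf (P i)) f"
  by (rule Bochner_Integration.integrable_bound[OF integrable_tot[OF assms(1)]])
     (use assms(2) in \<open>auto intro: AE_pmfI\<close>)

lemma integrable_sum_supp:
  fixes f :: "nat \<Rightarrow> (nat \<Rightarrow> nat) \<Rightarrow> real"
  assumes "Mtot_enn P i < \<infinity>" and "\<And>j z. 0 \<le> f j z \<and> f j z \<le> real (z j)"
  shows "integrable (measure_pmf (P i)) (\<lambda>z. \<Sum>j\<in>supp z. f j z)"
proof (rule integrable_le_tot[OF assms(1)])
  fix z
  show "\<bar>\<Sum>j\<in>supp z. f j z\<bar> \<le> real (tot z)"
    using sum_supp_le_tot[of "\<lambda>j. f j z" z] assms(2) by simp
qed

lemma Menn_eq_ennreal_Mij:
  assumes G: "GWBP P" and fin: "Mtot_enn P i < \<infinity>"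
  shows "Menn P i j = ennreal (Mij P i j)"
proof -
  have "Menn P i j \<le> Mtot_enn P i"
    unfolding Menn_def Mtot_enn_def
    by (intro nn_integral_mono_AE AE_pmfI) (use le_tot GWBP_finite_supp[OF G] in auto)
  then show ?thesis
    using fin by (simp add: Mij_def ennreal_enn2real_if)
qed

lemma sums_integral_sum_supp:
  fixes f :: "nat \<Rightarrow> (nat \<Rightarrow> nat) \<Rightarrow> real"
  assumes G: "GWBP P" and fin: "Mtot_enn P i < \<infinity>"
    and f: "\<And>j z. 0 \<le> f j z \<and> f j z \<le> real (z j)"
  shows "(\<lambda>j. \<integral>z. f j z \<partial>P i) sums (\<integral>z. (\<Sum>j\<in>supp z. f j z) \<partial>P i)"
proof -
  have If: "integrable (measure_pmf (P i)) (f j)" for j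
  proof (rule integrable_le_tot[OF fin])
    fix z assume "z \<in> set_pmf (P i)"
    then have "z j \<le> tot z"
      using le_tot GWBP_finite_supp[OF G] by blast
    then show "\<bar>f j z\<bar> \<le> real (tot z)"
      using f[of j z] by simp
  qed
  have Isum: "integrable (measure_pmf (P i)) (\<lambda>z. \<Sum>j\<in>supp z. f j z)"
    by (rule integrable_sum_supp[OF fin]) (rule f)
  have nn: "0 \<le> (\<integral>z. f j z \<partial>P i)" for j
    using f by (simp add: integral_nonneg_AE)
  have "(\<Sum>j. ennreal (\<integral>z. f j z \<partial>P i)) = (\<Sum>j. \<integral>\<^sup>+z. ennreal (f j z) \<partial>P i)"
    using nn_integral_eq_integral[OF If] f by simp
  also have "\<dots> = (\<integral>\<^sup>+z. (\<Sum>j. ennreal (f j z)) \<partial>P i)"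
    by (rule nn_integral_suminf[symmetric]) simp
  also have "\<dots> = (\<integral>\<^sup>+z. ennreal (\<Sum>j\<in>supp z. f j z) \<partial>P i)"
  proof (intro nn_integral_cong_AE AE_pmfI)
    fix z assume z: "z \<in> set_pmf (P i)"
    have "f j z \<le> 0" if "j \<notin> supp z" for j
      using that f[of j z] by (simp add: supp_def)
    then have "(\<Sum>j. ennreal (f j z)) = (\<Sum>j\<in>supp z. ennreal (f j z))"
      by (intro suminf_finite[OF GWBP_finite_supp[OF G z]]) (simp add: ennreal_eq_0_iff)
    then show "(\<Sum>j. ennreal (f j z)) = ennreal (\<Sum>j\<in>supp z. f j z)"
      using f by simp
  qed
  also have "\<dots> = ennreal (\<integral>z. (\<Sum>j\<in>supp z. f j z) \<partial>P i)"
    using nn_integral_eq_integral[OF Isum] f by (simp add: sum_nonneg)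
  finally show ?thesis
    by (rule sums_if_ennreal_suminf_eq[OF nn]) (use f in \<open>simp add: sum_nonneg integral_nonneg_AE\<close>)
qed

lemma Mij_weighted_sums:
  assumes G: "GWBP P" and fin: "Mtot_enn P i < \<infinity>" and w: "\<And>j. 0 \<le> w j \<and> w j \<le> 1"
  shows "(\<lambda>j. Mij P i j * w j) sums (\<integral>z. (\<Sum>j\<in>supp z. real (z j) * w j) \<partial>P i)"
proof -
  have "(\<lambda>j. \<integral>z. real (z j) * w j \<partial>P i) sums (\<integral>z. (\<Sum>j\<in>supp z. real (z j) * w j) \<partial>P i)"
    by (rule sums_integral_sum_supp[OF G fin]) (use w in \<open>auto intro: mult_left_le\<close>)
  then show ?thesis
    by (simp add: Mij_eq_integral)
qed

lemma Mij_sums_Mtot: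
  assumes "GWBP P" and "Mtot_enn P i < \<infinity>"
  shows "(\<lambda>j. Mij P i j) sums Mtot P i"
  using Mij_weighted_sums[OF assms, of "\<lambda>_. 1"] by (simp add: Mtot_eq_integral tot_def)

lemma ennreal_Mij_weighted_suminf:
  assumes G: "GWBP P" and fin: "Mtot_enn P i < \<infinity>" and w: "\<And>j. 0 \<le> w j \<and> w j \<le> 1"
  shows "ennreal (\<Sum>j. Mij P i j * w j) = (\<Sum>j. Menn P i j * ennreal (w j))"
proof -
  have nn: "0 \<le> Mij P i j * w j" for j
    using Mij_nonneg[of P i j] w[of j] by simp
  have "ennreal (\<Sum>j. Mij P i j * w j) = (\<Sum>j. ennreal (Mij P i j * w j))"
    using suminf_ennreal2[OF nn] Mij_weighted_sums[OF G fin w] by (simp add: sums_iff)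
  also have "\<dots> = (\<Sum>j. Menn P i j * ennreal (w j))"
    using w by (simp add: Menn_eq_ennreal_Mij[OF G fin] ennreal_mult Mij_nonneg)
  finally show ?thesis .
qed

lemma Mij_tail_le:
  assumes G: "GWBP P" and fin: "Mtot_enn P i < \<infinity>"
    and tail: "(\<Sum>k. Mij P i (k + N + 1)) / Mtot P i \<le> \<eta>"
  shows "(\<Sum>k. Mij P i (k + N + 1)) \<le> \<eta> * Mtot P i"
proof (cases "Mtot P i = 0")
  case True
  have "summable (\<lambda>j. Mij P i j)" "(\<Sum>j. Mij P i j) = 0"
    using Mij_sums_Mtot[OF G fin] True by (auto simp: sums_iff)
  then have "\<forall>j. Mij P i j = 0"
    using suminf_eq_zero_iff Mij_nonneg by blast
  then show ?thesis
    using True by simp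
next
  case False
  then show ?thesis
    using tail Mtot_nonneg[of P i] by (simp add: divide_le_eq)
qed

lemma Mtot_eq_head_plus_tail:
  assumes "GWBP P" and "Mtot_enn P i < \<infinity>"
  shows "Mtot P i = (\<Sum>j<Suc N. Mij P i j) + (\<Sum>k. Mij P i (k + N + 1))"
  using suminf_split_initial_segment[of "\<lambda>j. Mij P i j" "Suc N"] Mij_sums_Mtot[OF assms]
  by (simp add: sums_iff)

lemma unit_cube_bounds: "s \<in> unit_cube \<Longrightarrow> 0 \<le> s j \<and> s j \<le> 1"
  by (simp add: unit_cube_def)

lemma zero_in_unit_cube: "(\<lambda>_. 0) \<in> unit_cube"
  by (simp add: unit_cube_def)

lemma prod_power_bounds:
  assumes "s \<in> unit_cube"
  shows "0 \<le> (\<Prod>j\<in>supp z. s j ^ z j)" and "(\<Prod>j\<in>supp z. s j ^ z j) \<le> (1::real)"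
  using unit_cube_bounds[OF assms] by (auto intro!: prod_nonneg prod_le_1 power_le_one)

lemma integrable_prod_power:
  assumes "s \<in> unit_cube"
  shows "integrable (measure_pmf p) (\<lambda>z. \<Prod>j\<in>supp z. s j ^ z j)"
  by (rule measure_pmf.integrable_const_bound[where B=1]) (use prod_power_bounds[OF assms] in auto)

lemma one_minus_genF_eq_integral:
  assumes "s \<in> unit_cube"
  shows "1 - genF P i s = (\<integral>z. 1 - (\<Prod>j\<in>supp z. s j ^ z j) \<partial>P i)"
  unfolding genF_def using integrable_prod_power[OF assms] by (simp add: Bochner_Integration.integral_diff)

lemma genF_bounds:
  assumes "s \<in> unit_cube"
  shows "0 \<le> genF P i s" and "genF P i s \<le> 1"
proof -
  show "0 \<le> genF P i s"
    unfolding genF_def by (rule integral_nonneg_AE) (use prod_power_bounds[OF assms] in auto)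
  have "0 \<le> 1 - genF P i s"
    unfolding one_minus_genF_eq_integral[OF assms]
    by (rule integral_nonneg_AE) (use prod_power_bounds[OF assms] in auto)
  then show "genF P i s \<le> 1" by simp
qed

lemma genF_mono:
  assumes "s \<in> unit_cube" "t \<in> unit_cube" "\<And>j. s j \<le> t j"
  shows "genF P i s \<le> genF P i t"
  unfolding genF_def
proof (rule integral_mono[OF integrable_prod_power[OF assms(1)] integrable_prod_power[OF assms(2)]])
  fix z :: "nat \<Rightarrow> nat"
  show "(\<Prod>j\<in>supp z. s j ^ z j) \<le> (\<Prod>j\<in>supp z. t j ^ z j)"
    using unit_cube_bounds[OF assms(1)] assms(3) by (intro prod_mono) (auto intro: power_mono)
qed

lemma genFn_in_unit_cube: "s \<in> unit_cube \<Longrightarrow> genFn P n s \<in> unit_cube"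
  by (induction n) (auto simp: unit_cube_def genF_bounds)

lemma genFn_mono:
  assumes "s \<in> unit_cube" "t \<in> unit_cube" "\<And>j. s j \<le> t j"
  shows "genFn P n s j \<le> genFn P n t j"
proof (induction n arbitrary: j)
  case 0
  then show ?case using assms by simp
next
  case (Suc n)
  then show ?case
    using genF_mono[OF genFn_in_unit_cube[OF assms(1)] genFn_in_unit_cube[OF assms(2)]] by simp
qed

lemma mean_minus_one_minus_genF_eq_integral:
  assumes G: "GWBP P" and fin: "Mtot_enn P i < \<infinity>" and s: "s \<in> unit_cube"
  shows "(\<Sum>j. Mij P i j * (1 - s j)) - (1 - genF P i s)
       = (\<integral>z. linearisation_defect s z \<partial>P i)"
proof -
  have w: "\<And>j. 0 \<le> 1 - s j \<and> 1 - s j \<le> 1"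
    using unit_cube_bounds[OF s] by auto
  have "integrable (measure_pmf (P i)) (\<lambda>z. \<Sum>j\<in>supp z. real (z j) * (1 - s j))"
    by (rule integrable_sum_supp[OF fin]) (use w in \<open>auto intro: mult_left_le\<close>)
  moreover have "integrable (measure_pmf (P i)) (\<lambda>z. 1 - (\<Prod>j\<in>supp z. s j ^ z j))"
    using integrable_prod_power[OF s] by simp
  ultimately show ?thesis
    unfolding sums_unique[OF Mij_weighted_sums[OF G fin w], symmetric] one_minus_genF_eq_integral[OF s]
      linearisation_defect_def
    by simp
qed

lemma integrable_linearisation_defect:
  assumes fin: "Mtot_enn P i < \<infinity>" and s: "s \<in> unit_cube"
  shows "integrable (measure_pmf (P i)) (linearisation_defect s)"
proof -
  have "integrable (measure_pmf (P i)) (\<lambda>z. \<Sum>j\<in>supp z. real (z j) * (1 - s j))"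
    by (rule integrable_sum_supp[OF fin]) (use unit_cube_bounds[OF s] in \<open>auto intro: mult_left_le\<close>)
  then show ?thesis
    using integrable_prod_power[OF s] unfolding linearisation_defect_def[abs_def] by simp
qed

lemma one_minus_genF_le_mean:
  assumes G: "GWBP P" and fin: "Mtot_enn P i < \<infinity>" and s: "s \<in> unit_cube"
  shows "1 - genF P i s \<le> (\<Sum>j. Mij P i j * (1 - s j))"
proof -
  have "0 \<le> (\<integral>z. linearisation_defect s z \<partial>P i)"
    using linearisation_defect_nonneg GWBP_finite_supp[OF G] unit_cube_bounds[OF s]
    by (intro integral_nonneg_AE AE_pmfI) blast
  then show ?thesis
    using mean_minus_one_minus_genF_eq_integral[OF assms] by simp
qed

lemma le_norm_inf:
  assumes "s \<in> unit_cube"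
  shows "1 - s j \<le> norm_inf s"
  unfolding norm_inf_def
  by (rule cSUP_upper) (use unit_cube_bounds[OF assms] in \<open>auto intro!: bdd_aboveI[where M=1]\<close>)

lemma norm_inf_nonneg: "s \<in> unit_cube \<Longrightarrow> 0 \<le> norm_inf s"
  using le_norm_inf[of s 0] unit_cube_bounds[of s 0] by simp

lemma norm_inf_le: "(\<And>j. 1 - s j \<le> c) \<Longrightarrow> norm_inf s \<le> c"
  unfolding norm_inf_def by (rule cSUP_least) auto

lemma norm_inf_pos:
  assumes "s \<in> Sset"
  shows "0 < norm_inf s"
proof -
  have s: "s \<in> unit_cube" and "s \<noteq> (\<lambda>_. 1)"
    using assms by (auto simp: Sset_def)
  then obtain j where "s j \<noteq> 1"
    by auto
  then show ?thesis
    using le_norm_inf[OF s, of j] unit_cube_bounds[OF s, of j] by simp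
qed

lemma calQ_eq_norm_inf: "calQ P n s = norm_inf (genFn P n s)"
  by (simp add: calQ_def Qn_def norm_inf_def)

section \<open>The defect \<open>\<epsilon>\<^sub>2\<close> near \<open>1\<close>\<close>

definition tot_mean_above :: "offspring \<Rightarrow> nat \<Rightarrow> nat \<Rightarrow> real" where
  "tot_mean_above P i K = enn2real (\<integral>\<^sup>+ z. of_nat (tot z) * indicator {z. tot z > K} z \<partial>measure_pmf (P i))"

definition eps2_integrand :: "(nat \<Rightarrow> real) \<Rightarrow> (nat \<Rightarrow> nat) \<Rightarrow> real" where
  "eps2_integrand s z = (\<Sum>j\<in>supp z. real (z j) * (1 - s j) - (1 - s j ^ z j))"

lemma eps2_numerator_eq_integral:
  assumes G: "GWBP P" and fin: "Mtot_enn P i < \<infinity>" and s: "s \<in> unit_cube"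
  shows "(\<Sum>j. Mij P i j * (1 - s j)) - (\<Sum>j. Qij P i j (s j))
       = (\<integral>z. eps2_integrand s z \<partial>P i)"
proof -
  have w: "\<And>j. 0 \<le> 1 - s j \<and> 1 - s j \<le> 1"
    using unit_cube_bounds[OF s] by auto
  have q: "0 \<le> 1 - s j ^ k \<and> 1 - s j ^ k \<le> real k" for j k
    using power_le_one[of "s j" k] one_minus_power_le[of "s j" k] w[of j]
    by (auto intro: order_trans[OF _ mult_left_le])
  have Qij: "Qij P i j (s j) = (\<integral>z. 1 - s j ^ z j \<partial>P i)" for j
    unfolding Qij_def using w[of j]
    by (subst Bochner_Integration.integral_diff)
       (auto intro!: measure_pmf.integrable_const_bound[where B=1] simp: power_le_one)
  have "(\<lambda>j. Qij P i j (s j)) sums (\<integral>z. (\<Sum>j\<in>supp z. 1 - s j ^ z j) \<partial>P i)"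
    unfolding Qij by (rule sums_integral_sum_supp[OF G fin]) (rule q)
  moreover have "integrable (measure_pmf (P i)) (\<lambda>z. \<Sum>j\<in>supp z. 1 - s j ^ z j)"
    by (rule integrable_sum_supp[OF fin]) (rule q)
  moreover have "integrable (measure_pmf (P i)) (\<lambda>z. \<Sum>j\<in>supp z. real (z j) * (1 - s j))"
    by (rule integrable_sum_supp[OF fin]) (use w in \<open>auto intro: mult_left_le\<close>)
  ultimately show ?thesis
    unfolding sums_unique[OF Mij_weighted_sums[OF G fin w], symmetric] eps2_integrand_def
    by (simp add: sums_iff sum_subtractf)
qed

lemma eps2_integrand_nonneg:
  assumes "s \<in> unit_cube"
  shows "0 \<le> eps2_integrand s z"
  unfolding eps2_integrand_def
  using one_minus_power_le unit_cube_bounds[OF assms] by (intro sum_nonneg) simp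

lemma eps2_integrand_le_linear:
  assumes s: "s \<in> unit_cube"
  shows "eps2_integrand s z \<le> norm_inf s * real (tot z)"
proof -
  have "eps2_integrand s z \<le> (\<Sum>j\<in>supp z. real (z j) * norm_inf s)"
    unfolding eps2_integrand_def
  proof (rule sum_mono)
    fix j
    have "real (z j) * (1 - s j) \<le> real (z j) * norm_inf s"
      using le_norm_inf[OF s] by (intro mult_left_mono) auto
    then show "real (z j) * (1 - s j) - (1 - s j ^ z j) \<le> real (z j) * norm_inf s"
      using power_le_one[of "s j" "z j"] unit_cube_bounds[OF s, of j] by simp
  qed
  then show ?thesis
    by (simp add: tot_def sum_distrib_left mult.commute)
qed

lemma eps2_integrand_le_quadratic:
  assumes s: "s \<in> unit_cube" and f: "finite (supp z)"
  shows "eps2_integrand s z \<le> (norm_inf s)\<^sup>2 * real (tot z) * real (tot z)"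
proof -
  have "eps2_integrand s z \<le> (\<Sum>j\<in>supp z. (norm_inf s)\<^sup>2 * real (tot z) * real (z j))"
    unfolding eps2_integrand_def
  proof (rule sum_mono)
    fix j
    have "real (z j) * (1 - s j) - (1 - s j ^ z j) \<le> (real (z j))\<^sup>2 * (1 - s j)\<^sup>2"
      using power_defect_le unit_cube_bounds[OF s] by blast
    also have "\<dots> \<le> (real (z j))\<^sup>2 * (norm_inf s)\<^sup>2"
      using le_norm_inf[OF s, of j] unit_cube_bounds[OF s, of j] by (intro mult_left_mono power_mono) auto
    also have "\<dots> = (norm_inf s)\<^sup>2 * real (z j) * real (z j)"
      by (simp add: power2_eq_square)
    also have "\<dots> \<le> (norm_inf s)\<^sup>2 * real (tot z) * real (z j)"
      using le_tot[OF f, of j] by (intro mult_right_mono mult_left_mono) auto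
    finally show "real (z j) * (1 - s j) - (1 - s j ^ z j) \<le> (norm_inf s)\<^sup>2 * real (tot z) * real (z j)" .
  qed
  then show ?thesis
    by (simp add: tot_def sum_distrib_left)
qed

text \<open>Large families are controlled linearly, small ones quadratically.\<close>
lemma eps2_integrand_le:
  assumes s: "s \<in> unit_cube" and f: "finite (supp z)"
  shows "eps2_integrand s z \<le> norm_inf s * (real (tot z) * indicator {z. tot z > K} z)
                              + (norm_inf s)\<^sup>2 * real K * real (tot z)"
proof (cases "tot z > K")
  case True
  then show ?thesis
    using eps2_integrand_le_linear[OF s, of z] by (simp add: add_increasing2)
next
  case False
  then have "(norm_inf s)\<^sup>2 * real (tot z) * real (tot z) \<le> (norm_inf s)\<^sup>2 * real K * real (tot z)"
    by (intro mult_right_mono mult_left_mono) auto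
  then show ?thesis
    using False eps2_integrand_le_quadratic[OF s f] by simp
qed

lemma integral_eps2_integrand_le:
  assumes G: "GWBP P" and fin: "Mtot_enn P i < \<infinity>" and s: "s \<in> unit_cube"
  shows "(\<integral>z. eps2_integrand s z \<partial>P i)
           \<le> norm_inf s * tot_mean_above P i K + (norm_inf s)\<^sup>2 * real K * Mtot P i"
proof -
  define g where "g z = real (tot z) * indicator {z. tot z > K} z" for z :: "nat \<Rightarrow> nat"
  have g: "tot_mean_above P i K = (\<integral>z. g z \<partial>P i)"
    unfolding tot_mean_above_def by (rule enn2real_nn_integral_eq_integral)
       (auto simp: g_def indicator_def ennreal_of_nat_eq_real_of_nat)
  have Ig: "integrable (measure_pmf (P i)) g"
    by (rule integrable_le_tot[OF fin]) (simp add: g_def indicator_def)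
  have "norm_inf s \<le> 1"
    using unit_cube_bounds[OF s] by (intro norm_inf_le) simp
  then have "eps2_integrand s z \<le> real (tot z)" for z
    using eps2_integrand_le_linear[OF s, of z] mult_right_mono[of "norm_inf s" 1 "real (tot z)"]
    by simp
  then have IE: "integrable (measure_pmf (P i)) (eps2_integrand s)"
    using eps2_integrand_nonneg[OF s] by (intro integrable_le_tot[OF fin]) simp
  have IB: "integrable (measure_pmf (P i)) (\<lambda>z. norm_inf s * g z + (norm_inf s)\<^sup>2 * real K * real (tot z))"
    using Ig integrable_tot[OF fin] by simp
  have "(\<integral>z. eps2_integrand s z \<partial>P i)
      \<le> (\<integral>z. norm_inf s * g z + (norm_inf s)\<^sup>2 * real K * real (tot z) \<partial>P i)"
    using eps2_integrand_le[OF s GWBP_finite_supp[OF G]]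
    by (intro integral_mono_AE[OF IE IB] AE_pmfI) (simp add: g_def)
  also have "\<dots> = norm_inf s * (\<integral>z. g z \<partial>P i) + (norm_inf s)\<^sup>2 * real K * Mtot P i"
    using Ig integrable_tot[OF fin] by (simp add: Mtot_eq_integral)
  finally show ?thesis
    unfolding g .
qed

lemma abs_eps2_le:
  assumes G: "GWBP P" and fin: "Mtot_enn P i < \<infinity>" and s: "s \<in> unit_cube" and "0 \<le> \<eta>"
    and UI: "tot_mean_above P i K / Mtot P i \<le> \<eta>"
  shows "\<bar>eps2 P i s\<bar> \<le> norm_inf s * (\<eta> + norm_inf s * real K)"
proof (cases "Mtot P i = 0")
  case True
  then show ?thesis
    using norm_inf_nonneg[OF s] \<open>0 \<le> \<eta>\<close> by (simp add: eps2_def)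
next
  case False
  then have M: "0 < Mtot P i"
    using Mtot_nonneg[of P i] by simp
  have "0 \<le> (\<integral>z. eps2_integrand s z \<partial>P i)"
    using eps2_integrand_nonneg[OF s] by (simp add: integral_nonneg_AE)
  then have "\<bar>eps2 P i s\<bar> = (\<integral>z. eps2_integrand s z \<partial>P i) / Mtot P i"
    using M by (simp add: eps2_def eps2_numerator_eq_integral[OF G fin s])
  also have "\<dots> \<le> (norm_inf s * tot_mean_above P i K + (norm_inf s)\<^sup>2 * real K * Mtot P i) / Mtot P i"
    using integral_eps2_integrand_le[OF G fin s] M by (simp add: divide_right_mono)
  also have "\<dots> = norm_inf s * (tot_mean_above P i K / Mtot P i) + (norm_inf s)\<^sup>2 * real K"
    using M by (simp add: field_simps)
  also have "\<dots> \<le> norm_inf s * \<eta> + (norm_inf s)\<^sup>2 * real K"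
    by (intro add_right_mono mult_left_mono[OF UI norm_inf_nonneg[OF s]])
  finally show ?thesis
    by (simp add: algebra_simps power2_eq_square)
qed

lemma M1_Mtot_enn_finite: "M1 P \<Longrightarrow> Mtot_enn P i < \<infinity>"
  by (simp add: M1_def)

lemma M1_uniform_integrability:
  assumes "M1 P" and "0 < \<eta>"
  obtains K where "\<And>i. tot_mean_above P i K / Mtot P i \<le> \<eta>"
  using assms unfolding M1_def tot_mean_above_def by (meson order_refl)

lemma M1_uniform_tail:
  assumes "M1 P" and "0 < \<eta>"
  obtains N where "\<And>i. (\<Sum>k. Mij P i (k + N + 1)) / Mtot P i \<le> \<eta>"
  using assms unfolding M1_def by (meson order_refl)

lemma eps2_uniformly_small:
  assumes G: "GWBP P" and M: "M1 P" and e: "0 < e"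
  obtains d where "0 < d"
    and "\<And>s i. s \<in> unit_cube \<Longrightarrow> norm_inf s < d \<Longrightarrow> \<bar>eps2 P i s\<bar> \<le> e * norm_inf s"
proof -
  obtain K where K: "\<And>i. tot_mean_above P i K / Mtot P i \<le> e / 2"
    using M1_uniform_integrability[OF M, of "e / 2"] e by auto
  define d where "d = e / (2 * (real K + 1))"
  have "0 < d"
    using e by (simp add: d_def)
  moreover have "\<bar>eps2 P i s\<bar> \<le> e * norm_inf s" if s: "s \<in> unit_cube" and sd: "norm_inf s < d" for s i
  proof -
    have "norm_inf s * real K \<le> d * real K"
      using sd by (intro mult_right_mono) auto
    also have "\<dots> \<le> e / 2"
      using e by (simp add: d_def field_simps)
    finally have "e / 2 + norm_inf s * real K \<le> e"
      by simp
    then have "norm_inf s * (e / 2 + norm_inf s * real K) \<le> e * norm_inf s"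
      using norm_inf_nonneg[OF s] by (metis mult.commute mult_left_mono)
    moreover have "\<bar>eps2 P i s\<bar> \<le> norm_inf s * (e / 2 + norm_inf s * real K)"
      by (rule abs_eps2_le[OF G M1_Mtot_enn_finite[OF M] s _ K]) (use e in simp)
    ultimately show ?thesis
      by linarith
  qed
  ultimately show ?thesis
    using that by blast
qed

section \<open>Uniform convergence of \<open>F(n; 0)\<close> to \<open>1\<close>\<close>

lemma M1_eigenvectors:
  assumes "M1 P"
  shows "\<exists>v u. (\<forall>j. 0 < v j) \<and> (\<forall>j. 0 < u j) \<and> left_eigen P v \<and> right_eigen P u
           \<and> (\<lambda>j. v j * u j) sums 1 \<and> v sums 1 \<and> bdd_above (range u)"
  using assms unfolding M1_def by (elim conjE)

lemma M1_irreducible: "M1 P \<Longrightarrow> irreducible_M P"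
  by (simp add: M1_def)

lemma Mij_weighted_le:
  assumes G: "GWBP P" and fin: "Mtot_enn P i < \<infinity>" and w: "\<And>j. 0 \<le> w j \<and> w j \<le> 1"
    and tail: "(\<Sum>k. Mij P i (k + N + 1)) / Mtot P i \<le> \<eta>"
    and c: "0 \<le> c" "\<And>j. j \<le> N \<Longrightarrow> w j \<le> c"
  shows "(\<Sum>j. Mij P i j * w j) \<le> c * Mtot P i + \<eta> * Mtot P i"
proof -
  have S: "summable (\<lambda>j. Mij P i j)" "summable (\<lambda>j. Mij P i j * w j)"
    using Mij_sums_Mtot[OF G fin] Mij_weighted_sums[OF G fin w] by (auto simp: sums_iff)
  have tail_nonneg: "0 \<le> (\<Sum>k. Mij P i (k + N + 1))"
    using summable_ignore_initial_segment[OF S(1), of "Suc N"] by (simp add: suminf_nonneg Mij_nonneg)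
  have "(\<Sum>j<Suc N. Mij P i j * w j) \<le> (\<Sum>j<Suc N. c * Mij P i j)"
    using c w by (intro sum_mono) (auto simp: mult.commute intro: mult_right_mono Mij_nonneg)
  also have "\<dots> \<le> c * Mtot P i"
    using Mtot_eq_head_plus_tail[OF G fin, of N] tail_nonneg c(1)
    by (simp add: sum_distrib_left[symmetric] mult_left_mono)
  finally have head: "(\<Sum>j<Suc N. Mij P i j * w j) \<le> c * Mtot P i" .
  have T: "summable (\<lambda>k. Mij P i (k + Suc N) * w (k + Suc N))" "summable (\<lambda>k. Mij P i (k + Suc N))"
    by (rule summable_ignore_initial_segment[OF S(2)], rule summable_ignore_initial_segment[OF S(1)])
  have "(\<Sum>k. Mij P i (k + Suc N) * w (k + Suc N)) \<le> (\<Sum>k. Mij P i (k + Suc N))"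
    using w Mij_nonneg by (intro suminf_le[OF _ T]) (auto intro: mult_left_le)
  also have "\<dots> \<le> \<eta> * Mtot P i"
    using Mij_tail_le[OF G fin tail] by simp
  finally show ?thesis
    using suminf_split_initial_segment[OF S(2), of "Suc N"] head by simp
qed

lemma right_eigen_partial_sum_le:
  assumes G: "GWBP P" and fin: "Mtot_enn P i < \<infinity>" and u: "\<And>j. 0 < u j" "right_eigen P u"
    and "finite A"
  shows "(\<Sum>j\<in>A. Mij P i j * u j) \<le> u i"
proof -
  have "ennreal (\<Sum>j\<in>A. Mij P i j * u j) = (\<Sum>j\<in>A. ennreal (Mij P i j * u j))"
    by (rule sum_ennreal[symmetric]) (simp add: Mij_nonneg less_imp_le u(1))
  also have "\<dots> = (\<Sum>j\<in>A. Menn P i j * ennreal (u j))"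
    by (intro sum.cong refl) (simp add: Menn_eq_ennreal_Mij[OF G fin] ennreal_mult Mij_nonneg less_imp_le u(1))
  also have "\<dots> \<le> (\<Sum>j. Menn P i j * ennreal (u j))"
    by (rule sum_le_suminf[OF summableI]) (simp_all add: \<open>finite A\<close>)
  also have "\<dots> = ennreal (u i)"
    using u(2) by (simp add: right_eigen_def)
  finally show ?thesis
    using u(1)[of i] by (simp add: ennreal_le_iff less_imp_le)
qed

text \<open>The bounded right eigenvector \<open>u\<close> bounds \<open>\<Sum>\<^sub>j M\<^sub>i\<^sub>j u\<^sub>j\<close>, and by the uniform tail
  condition a fixed finite set of types carries at least half of every \<open>M\<^sub>i\<close>.\<close>
lemma Mtot_bounded:
  assumes G: "GWBP P" and M: "M1 P"
  obtains B where "0 < B" and "\<And>i. Mtot P i \<le> B"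
proof -
  obtain u where u: "\<And>j. 0 < u j" "right_eigen P u" "bdd_above (range u)"
    using M1_eigenvectors[OF M] by blast
  obtain U where U: "\<And>j. u j \<le> U"
    using u(3) by (auto simp: bdd_above_def)
  obtain N where N: "\<And>i. (\<Sum>k. Mij P i (k + N + 1)) / Mtot P i \<le> 1 / 2"
    using M1_uniform_tail[OF M, of "1 / 2"] by auto
  define c where "c = Min (u ` {..<Suc N})"
  have c: "0 < c"
    unfolding c_def using u(1) by (subst Min_gr_iff) auto
  have c_le: "c \<le> u j" if "j \<in> {..<Suc N}" for j
    unfolding c_def using that by (intro Min_le) auto
  have "Mtot P i \<le> 2 * U / c" for i
  proof -
    note fin = M1_Mtot_enn_finite[OF M, of i]
    have "c * (\<Sum>j<Suc N. Mij P i j) \<le> (\<Sum>j<Suc N. Mij P i j * u j)"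
      unfolding sum_distrib_left
      using c_le Mij_nonneg by (intro sum_mono) (simp add: mult.commute mult_right_mono)
    also have "\<dots> \<le> U"
      using right_eigen_partial_sum_le[OF G fin u(1,2) finite_lessThan] U[of i] by (rule order_trans)
    finally have head: "c * (\<Sum>j<Suc N. Mij P i j) \<le> U" .
    have "Mtot P i \<le> 2 * (\<Sum>j<Suc N. Mij P i j)"
      using Mtot_eq_head_plus_tail[OF G fin, of N] Mij_tail_le[OF G fin N] by simp
    then have "c * Mtot P i \<le> c * (2 * (\<Sum>j<Suc N. Mij P i j))"
      using c by (intro mult_left_mono) auto
    also have "\<dots> = 2 * (c * (\<Sum>j<Suc N. Mij P i j))"
      by (simp only: mult.left_commute)
    also have "\<dots> \<le> 2 * U"
      using head by (rule mult_left_mono) simp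
    finally have "c * Mtot P i \<le> 2 * U" .
    then show ?thesis
      using c by (simp add: field_simps)
  qed
  moreover have "0 < 2 * U / c"
    using u(1)[of 0] U[of 0] c by simp
  ultimately show ?thesis
    using that by blast
qed

lemma summable_mult_unit_interval:
  fixes v w :: "nat \<Rightarrow> real"
  assumes "summable v" "\<And>j. 0 \<le> v j" "\<And>j. 0 \<le> w j \<and> w j \<le> 1"
  shows "summable (\<lambda>j. v j * w j)"
  by (rule summable_comparison_test'[OF assms(1), of 0]) (use assms(2,3) in \<open>simp add: abs_mult mult_left_le\<close>)

lemma left_eigen_weighted_sums:
  assumes G: "GWBP P" and fin: "\<And>i. Mtot_enn P i < \<infinity>"
    and v: "\<And>j. 0 < v j" "left_eigen P v" "summable v"
    and w: "\<And>j. 0 \<le> w j \<and> w j \<le> 1"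
  shows "(\<lambda>i. v i * (\<Sum>j. Mij P i j * w j)) sums (\<Sum>j. v j * w j)"
proof -
  have vw: "summable (\<lambda>j. v j * w j)"
    by (rule summable_mult_unit_interval[OF v(3) less_imp_le[OF v(1)] w])
  have Mw: "0 \<le> (\<Sum>j. Mij P i j * w j)" for i
    using Mij_weighted_sums[OF G fin w] w Mij_nonneg by (intro suminf_nonneg) (auto simp: sums_iff)
  have "ennreal (v i * (\<Sum>j. Mij P i j * w j)) = ennreal (v i) * (\<Sum>j. Menn P i j * ennreal (w j))" for i
    using v(1)[of i] Mw[of i] by (simp add: ennreal_mult ennreal_Mij_weighted_suminf[OF G fin w])
  then have "(\<Sum>i. ennreal (v i * (\<Sum>j. Mij P i j * w j)))
      = (\<Sum>i. \<Sum>j. ennreal (v i) * Menn P i j * ennreal (w j))"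
    by (simp add: mult.assoc)
  also have "\<dots> = (\<Sum>j. \<Sum>i. ennreal (v i) * Menn P i j * ennreal (w j))"
    by (rule ennreal_suminf_swap)
  also have "\<dots> = (\<Sum>j. ennreal (v j * w j))"
    using v(1,2) w by (simp add: left_eigen_def ennreal_mult less_imp_le)
  also have "\<dots> = ennreal (\<Sum>j. v j * w j)"
    using v(1) w by (intro suminf_ennreal2[OF _ vw]) (simp add: less_imp_le)
  finally show ?thesis
    using v(1) Mw w vw
    by (intro sums_if_ennreal_suminf_eq) (auto intro: suminf_nonneg simp: less_imp_le)
qed

lemma Mpow_mult_le_superharmonic:
  assumes "\<And>i. (\<Sum>k. Menn P i k * ennreal (q k)) \<le> ennreal (q i)"
  shows "Mpow P n i j * ennreal (q j) \<le> ennreal (q i)"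
proof (induction n arbitrary: i)
  case 0
  then show ?case by simp
next
  case (Suc n)
  have "Mpow P (Suc n) i j * ennreal (q j) = (\<Sum>k. Menn P i k * (Mpow P n k j * ennreal (q j)))"
    by (simp only: Mpow.simps ennreal_suminf_multc[symmetric] mult.assoc)
  also have "\<dots> \<le> (\<Sum>k. Menn P i k * ennreal (q k))"
    by (intro suminf_le summableI mult_left_mono Suc.IH) simp_all
  also have "\<dots> \<le> ennreal (q i)"
    by (rule assms)
  finally show ?case .
qed

lemma superharmonic_pos_if_irreducible:
  assumes "irreducible_M P" and "\<And>i. (\<Sum>k. Menn P i k * ennreal (q k)) \<le> ennreal (q i)"
    and "0 < q j"
  shows "0 < q i"
proof -
  obtain n where "0 < Mpow P n i j"
    using assms(1) unfolding irreducible_M_def by blast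
  then have "0 < Mpow P n i j * ennreal (q j)"
    using assms(3) by (simp add: ennreal_zero_less_mult_iff)
  also have "\<dots> \<le> ennreal (q i)"
    by (rule Mpow_mult_le_superharmonic[OF assms(2)])
  finally show ?thesis
    by simp
qed

lemma fixed_point_harmonic:
  assumes G: "GWBP P" and M: "M1 P" and p: "p \<in> unit_cube" and fp: "\<And>i. genF P i p = p i"
  shows "(\<Sum>j. Mij P i j * (1 - p j)) = 1 - p i"
proof -
  obtain v where v: "\<And>j. 0 < v j" "left_eigen P v" "v sums 1"
    using M1_eigenvectors[OF M] by blast
  note fin = M1_Mtot_enn_finite[OF M]
  have w: "\<And>j. 0 \<le> 1 - p j \<and> 1 - p j \<le> 1"
    using unit_cube_bounds[OF p] by auto
  have "(\<lambda>i. v i * (1 - p i)) sums (\<Sum>j. v j * (1 - p j))"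
    using v w by (intro summable_sums summable_mult_unit_interval) (auto simp: sums_iff less_imp_le)
  moreover have "(\<lambda>i. v i * (\<Sum>j. Mij P i j * (1 - p j))) sums (\<Sum>j. v j * (1 - p j))"
    using v by (intro left_eigen_weighted_sums[OF G fin _ _ _ w]) (auto simp: sums_iff)
  moreover have "v i * (1 - p i) \<le> v i * (\<Sum>j. Mij P i j * (1 - p j))" for i
    using one_minus_genF_le_mean[OF G fin p, of i] fp[of i] v(1)[of i] by simp
  ultimately have "(\<lambda>i. v i * (1 - p i)) = (\<lambda>i. v i * (\<Sum>j. Mij P i j * (1 - p j)))"
    by (rule sums_eq_if_le)
  then have "v i * (1 - p i) = v i * (\<Sum>j. Mij P i j * (1 - p j))"
    by (rule fun_cong)
  then show ?thesis
    using v(1)[of i] by simp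
qed

lemma fixed_point_imp_tot_le_1:
  assumes G: "GWBP P" and M: "M1 P" and p: "p \<in> unit_cube" and fp: "\<And>i. genF P i p = p i"
    and "p j \<noteq> 1" and z: "z \<in> set_pmf (P i)"
  shows "tot z \<le> 1"
proof -
  note fin = M1_Mtot_enn_finite[OF M]
  have w: "\<And>j. 0 \<le> 1 - p j \<and> 1 - p j \<le> 1"
    using unit_cube_bounds[OF p] by auto
  have harmonic: "(\<Sum>k. Menn P i k * ennreal (1 - p k)) = ennreal (1 - p i)" for i
  proof -
    have "ennreal (\<Sum>j. Mij P i j * (1 - p j)) = (\<Sum>k. Menn P i k * ennreal (1 - p k))"
      by (rule ennreal_Mij_weighted_suminf[OF G fin]) (rule w)
    then show ?thesis
      using fixed_point_harmonic[OF G M p fp, of i] by simp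
  qed
  have "0 < 1 - p j"
    using \<open>p j \<noteq> 1\<close> unit_cube_bounds[OF p, of j] by simp
  then have "0 < 1 - p k" for k
    by (rule superharmonic_pos_if_irreducible[OF M1_irreducible[OF M] harmonic[THEN eq_refl]])
  then have p_lt_1: "\<And>k. 0 \<le> p k \<and> p k < 1"
    using unit_cube_bounds[OF p] by auto
  have "(\<integral>z. linearisation_defect p z \<partial>P i) = 0"
    using mean_minus_one_minus_genF_eq_integral[OF G fin p, of i]
      fixed_point_harmonic[OF G M p fp, of i] fp[of i] by simp
  moreover have "0 \<le> linearisation_defect p z'" if "z' \<in> set_pmf (P i)" for z'
    using linearisation_defect_nonneg[OF GWBP_finite_supp[OF G that] unit_cube_bounds[OF p]] .
  ultimately have "linearisation_defect p z = 0"
    using pmf_integral_eq_0_imp_eq_0[OF integrable_linearisation_defect[OF fin p] _ _ z] by blast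
  then show ?thesis
    by (rule linearisation_defect_eq_0_imp_tot_le_1[OF GWBP_finite_supp[OF G z] p_lt_1])
qed

lemma Mtot_le_1_imp_Mtot_eq_1:
  assumes G: "GWBP P" and M: "M1 P" and le1: "\<And>k. Mtot P k \<le> 1"
  shows "Mtot P i = 1"
proof -
  obtain v where v: "\<And>j. 0 < v j" "left_eigen P v" "v sums 1"
    using M1_eigenvectors[OF M] by blast
  note fin = M1_Mtot_enn_finite[OF M]
  have "(\<lambda>k. v k * Mtot P k) sums 1"
    using left_eigen_weighted_sums[OF G fin v(1,2) _, of "\<lambda>_. 1"] v(3)
      sums_unique[OF Mij_sums_Mtot[OF G fin]] by (simp add: sums_iff)
  moreover have "(\<lambda>k. v k * 1) sums 1"
    using v(3) by simp
  moreover have "v k * Mtot P k \<le> v k * 1" for k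
    using v(1)[of k] le1[of k] by simp
  ultimately have "(\<lambda>k. v k * Mtot P k) = (\<lambda>k. v k * 1)"
    by (rule sums_eq_if_le)
  then have "v i * Mtot P i = v i * 1"
    by (rule fun_cong)
  then show ?thesis
    using v(1)[of i] by simp
qed

lemma tot_le_1_imp_tot_eq_1:
  assumes G: "GWBP P" and M: "M1 P"
    and le1: "\<And>i z. z \<in> set_pmf (P i) \<Longrightarrow> tot z \<le> 1" and z: "z \<in> set_pmf (P i)"
  shows "tot z = 1"
proof -
  note fin = M1_Mtot_enn_finite[OF M]
  have "Mtot P k \<le> 1" for k
  proof -
    have "(\<integral>z. real (tot z) \<partial>P k) \<le> (\<integral>z. 1 \<partial>P k)"
      using le1 by (intro integral_mono_AE[OF integrable_tot[OF fin]] AE_pmfI) simp_all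
    then show ?thesis
      by (simp add: Mtot_eq_integral)
  qed
  then have "(\<integral>z. 1 - real (tot z) \<partial>P i) = 0"
    using Mtot_le_1_imp_Mtot_eq_1[OF G M, of i] integrable_tot[OF fin] by (simp add: Mtot_eq_integral)
  moreover have "integrable (measure_pmf (P i)) (\<lambda>z. 1 - real (tot z))"
    using integrable_tot[OF fin] by simp
  moreover have "0 \<le> 1 - real (tot z')" if "z' \<in> set_pmf (P i)" for z'
    using le1[OF that] by simp
  ultimately have "1 - real (tot z) = 0"
    using pmf_integral_eq_0_imp_eq_0[OF _ _ _ z] by blast
  then show ?thesis
    by simp
qed

lemma tot_eq_1_imp_F_linear:
  assumes G: "GWBP P" and fin: "\<And>i. Mtot_enn P i < \<infinity>"
    and one: "\<And>i z. z \<in> set_pmf (P i) \<Longrightarrow> tot z = 1"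
  shows "F_linear P"
  unfolding F_linear_def
proof (intro allI ballI)
  fix i s assume s: "s \<in> unit_cube"
  have "genF P i s = (\<integral>z. (\<Sum>k\<in>supp z. real (z k) * s k) \<partial>P i)"
    unfolding genF_def
  proof (intro integral_cong_AE AE_pmfI)
    fix z assume "z \<in> set_pmf (P i)"
    then obtain k where "supp z = {k}" "z k = 1"
      using tot_eq_1_imp_singleton GWBP_finite_supp[OF G] one by blast
    then show "(\<Prod>j\<in>supp z. s j ^ z j) = (\<Sum>k\<in>supp z. real (z k) * s k)"
      by simp
  qed simp_all
  then show "genF P i s = (\<Sum>j. Mij P i j * s j)"
    using sums_unique[OF Mij_weighted_sums[OF G fin unit_cube_bounds[OF s]]] by simp
qed

lemma fixed_point_eq_1:
  assumes G: "GWBP P" and M: "M1 P" and NL: "\<not> F_linear P"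
    and p: "p \<in> unit_cube" and fp: "\<And>i. genF P i p = p i"
  shows "p j = 1"
proof (rule ccontr)
  assume "p j \<noteq> 1"
  then have "tot z \<le> 1" if "z \<in> set_pmf (P i)" for i z
    using fixed_point_imp_tot_le_1[OF G M p fp _ that] by blast
  then have "tot z = 1" if "z \<in> set_pmf (P i)" for i z
    using tot_le_1_imp_tot_eq_1[OF G M _ that] by blast
  then have "F_linear P"
    by (rule tot_eq_1_imp_F_linear[OF G M1_Mtot_enn_finite[OF M]])
  with NL show False
    by contradiction
qed

lemma incseq_genFn_zero: "incseq (\<lambda>n. genFn P n (\<lambda>_. 0) j)"
proof (rule incseq_SucI)
  show "genFn P n (\<lambda>_. 0) j \<le> genFn P (Suc n) (\<lambda>_. 0) j" for n
  proof (induction n arbitrary: j)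
    case 0
    then show ?case
      using genF_bounds(1)[OF zero_in_unit_cube] by simp
  next
    case (Suc n)
    show ?case
      using genF_mono[OF genFn_in_unit_cube[OF zero_in_unit_cube] genFn_in_unit_cube[OF zero_in_unit_cube] Suc]
      by simp
  qed
qed

lemma genFn_zero_tendsto_SUP: "(\<lambda>n. genFn P n (\<lambda>_. 0) j) \<longlonglongrightarrow> (SUP n. genFn P n (\<lambda>_. 0) j)"
  by (rule LIMSEQ_incseq_SUP[OF _ incseq_genFn_zero])
     (use unit_cube_bounds[OF genFn_in_unit_cube[OF zero_in_unit_cube]] in \<open>auto intro!: bdd_aboveI[where M=1]\<close>)

lemma SUP_genFn_zero_fixed_point:
  fixes P :: offspring
  defines "p \<equiv> \<lambda>j. SUP n. genFn P n (\<lambda>_. 0) j"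
  shows "p \<in> unit_cube" and "genF P i p = p i"
proof -
  let ?a = "\<lambda>n. genFn P n (\<lambda>_. 0)"
  have lim: "(\<lambda>n. ?a n j) \<longlonglongrightarrow> p j" for j
    unfolding p_def by (rule genFn_zero_tendsto_SUP)
  have a: "?a n \<in> unit_cube" for n
    by (rule genFn_in_unit_cube[OF zero_in_unit_cube])
  show "p \<in> unit_cube"
    unfolding unit_cube_def
  proof (intro CollectI allI conjI)
    fix j
    show "0 \<le> p j"
      by (rule LIMSEQ_le_const[OF lim]) (use unit_cube_bounds[OF a] in auto)
    show "p j \<le> 1"
      by (rule LIMSEQ_le_const2[OF lim]) (use unit_cube_bounds[OF a] in auto)
  qed
  have "(\<lambda>n. genF P i (?a n)) \<longlonglongrightarrow> genF P i p"
    unfolding genF_def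
  proof (rule integral_dominated_convergence[where w="\<lambda>_. 1"])
    show "AE z in measure_pmf (P i). (\<lambda>n. \<Prod>j\<in>supp z. ?a n j ^ z j) \<longlonglongrightarrow> (\<Prod>j\<in>supp z. p j ^ z j)"
      by (intro AE_I2 tendsto_prod tendsto_power lim)
    show "\<And>n. AE z in measure_pmf (P i). norm (\<Prod>j\<in>supp z. ?a n j ^ z j) \<le> 1"
      using prod_power_bounds[OF a] by auto
  qed simp_all
  moreover have "(\<lambda>n. genF P i (?a n)) \<longlonglongrightarrow> p i"
    using LIMSEQ_Suc[OF lim[of i]] by simp
  ultimately show "genF P i p = p i"
    by (rule LIMSEQ_unique)
qed

lemma genFn_zero_tendsto_1:
  assumes "GWBP P" and "M1 P" and "\<not> F_linear P"
  shows "(\<lambda>n. genFn P n (\<lambda>_. 0) j) \<longlonglongrightarrow> 1"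
  using genFn_zero_tendsto_SUP[of P j] fixed_point_eq_1[OF assms SUP_genFn_zero_fixed_point] by simp

lemma one_minus_genF_le_if_close_on_head:
  assumes G: "GWBP P" and fin: "Mtot_enn P i < \<infinity>" and s: "s \<in> unit_cube"
    and tail: "(\<Sum>k. Mij P i (k + N + 1)) / Mtot P i \<le> \<eta>"
    and head: "\<And>j. j \<le> N \<Longrightarrow> 1 - s j \<le> \<eta>" and "0 \<le> \<eta>"
  shows "1 - genF P i s \<le> 2 * \<eta> * Mtot P i"
proof -
  have "1 - genF P i s \<le> (\<Sum>j. Mij P i j * (1 - s j))"
    by (rule one_minus_genF_le_mean[OF G fin s])
  also have "\<dots> \<le> \<eta> * Mtot P i + \<eta> * Mtot P i"
    using unit_cube_bounds[OF s] head \<open>0 \<le> \<eta>\<close> by (intro Mij_weighted_le[OF G fin _ tail]) auto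
  finally show ?thesis
    by simp
qed

text \<open>Pointwise convergence on the finitely many types \<open>0, \<dots>, N\<close>, which by the uniform tail
  condition carry all but a fraction \<open>\<eta>\<close> of every \<open>M\<^sub>i\<close>, becomes uniform after one more
  generation because the \<open>M\<^sub>i\<close> are bounded.\<close>
lemma genFn_zero_uniformly_1:
  assumes G: "GWBP P" and M: "M1 P" and NL: "\<not> F_linear P" and e: "0 < e"
  obtains N where "\<And>n i. N \<le> n \<Longrightarrow> 1 - genFn P n (\<lambda>_. 0) i \<le> e"
proof -
  obtain B where B: "0 < B" "\<And>i. Mtot P i \<le> B"
    using Mtot_bounded[OF G M] by auto
  define \<eta> where "\<eta> = e / (2 * B)"
  have \<eta>: "0 < \<eta>"
    using e B(1) by (simp add: \<eta>_def)
  obtain N where N: "\<And>i. (\<Sum>k. Mij P i (k + N + 1)) / Mtot P i \<le> \<eta>"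
    using M1_uniform_tail[OF M \<eta>] by auto
  let ?a = "\<lambda>n. genFn P n (\<lambda>_. 0)"
  have "\<forall>\<^sub>F n in sequentially. \<forall>j\<in>{..N}. 1 - \<eta> < ?a n j"
    using \<eta> by (intro eventually_ball_finite ballI order_tendstoD(1)[OF genFn_zero_tendsto_1[OF G M NL]]) auto
  then obtain n0 where n0: "\<And>n j. n0 \<le> n \<Longrightarrow> j \<le> N \<Longrightarrow> 1 - \<eta> < ?a n j"
    unfolding eventually_sequentially by auto
  have "1 - ?a n i \<le> e" if n: "Suc n0 \<le> n" for n i
  proof -
    obtain m where m: "n = Suc m" "n0 \<le> m"
      using n by (cases n) auto
    have "1 - ?a m j \<le> \<eta>" if "j \<le> N" for j
      using n0[OF m(2) that] by simp
    then have "1 - genF P i (?a m) \<le> 2 * \<eta> * Mtot P i"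
      using \<eta> by (intro one_minus_genF_le_if_close_on_head[OF G M1_Mtot_enn_finite[OF M]
                      genFn_in_unit_cube[OF zero_in_unit_cube] N]) auto
    also have "\<dots> \<le> 2 * \<eta> * B"
      using B(2)[of i] \<eta> by (intro mult_left_mono) auto
    also have "\<dots> = e"
      using B(1) by (simp add: \<eta>_def)
    finally show ?thesis
      using m(1) by simp
  qed
  then show ?thesis
    using that by blast
qed

lemma calQ_nonneg: "s \<in> unit_cube \<Longrightarrow> 0 \<le> calQ P n s"
  by (simp add: calQ_eq_norm_inf norm_inf_nonneg genFn_in_unit_cube)

lemma eps2_genFn_uniformly_small:
  assumes G: "GWBP P" and M: "M1 P" and NL: "\<not> F_linear P" and e: "0 < e"
  obtains N where "\<And>n s i. N \<le> n \<Longrightarrow> s \<in> unit_cube \<Longrightarrow> \<bar>eps2 P i (genFn P n s)\<bar> \<le> e * calQ P n s"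
proof -
  obtain d where "0 < d"
    and small: "\<And>s i. s \<in> unit_cube \<Longrightarrow> norm_inf s < d \<Longrightarrow> \<bar>eps2 P i s\<bar> \<le> e * norm_inf s"
    using eps2_uniformly_small[OF G M e] by auto
  obtain N where N: "\<And>n i. N \<le> n \<Longrightarrow> 1 - genFn P n (\<lambda>_. 0) i \<le> d / 2"
    using genFn_zero_uniformly_1[OF G M NL, of "d / 2"] \<open>0 < d\<close> by auto
  have "\<bar>eps2 P i (genFn P n s)\<bar> \<le> e * calQ P n s" if n: "N \<le> n" and s: "s \<in> unit_cube" for n s i
  proof -
    have mono: "genFn P n (\<lambda>_. 0) j \<le> genFn P n s j" for j
      using unit_cube_bounds[OF s] by (intro genFn_mono[OF zero_in_unit_cube s]) simp
    have "1 - genFn P n s j \<le> d / 2" for j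
      using N[OF n, of j] mono[of j] by linarith
    then have "norm_inf (genFn P n s) < d"
      using \<open>0 < d\<close> norm_inf_le[of "genFn P n s" "d / 2"] by simp
    then show ?thesis
      using small[OF genFn_in_unit_cube[OF s]] by (simp add: calQ_eq_norm_inf)
  qed
  then show ?thesis
    using that by blast
qed

lemma abs_divide_le_if_le_mult:
  fixes a b e :: real
  assumes "0 \<le> b" and "0 \<le> e" and "\<bar>a\<bar> \<le> e * b"
  shows "\<bar>a\<bar> / b \<le> e"
  using assms by (auto simp: divide_le_eq mult.commute)

theorem lemma7:
  fixes P :: offspring
  assumes "GWBP P" and "M1 P" and "\<not> F_linear P"
  shows "(\<forall>e>0. \<exists>d>0. \<forall>s\<in>Sset. norm_inf s < d \<longrightarrow>
            (\<forall>i. \<bar>eps2 P i s\<bar> / norm_inf s \<le> e))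
       \<and> (\<forall>e>0. \<exists>N. \<forall>n\<ge>N. \<forall>s\<in>Sset. \<forall>i.
            \<bar>eps2 P i (genFn P (n - 1) s)\<bar> / calQ P (n - 1) s \<le> e)"
proof (intro conjI allI impI)
  fix e :: real
  assume "0 < e"
  then obtain d where "0 < d"
    and "\<And>s i. s \<in> unit_cube \<Longrightarrow> norm_inf s < d \<Longrightarrow> \<bar>eps2 P i s\<bar> \<le> e * norm_inf s"
    using eps2_uniformly_small[OF assms(1,2)] by auto
  then show "\<exists>d>0. \<forall>s\<in>Sset. norm_inf s < d \<longrightarrow> (\<forall>i. \<bar>eps2 P i s\<bar> / norm_inf s \<le> e)"
    using \<open>0 < e\<close> by (auto simp: Sset_def intro!: abs_divide_le_if_le_mult norm_inf_nonneg)
next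
  fix e :: real
  assume "0 < e"
  then obtain N
    where "\<And>n s i. N \<le> n \<Longrightarrow> s \<in> unit_cube \<Longrightarrow> \<bar>eps2 P i (genFn P n s)\<bar> \<le> e * calQ P n s"
    using eps2_genFn_uniformly_small[OF assms] by auto
  then have "\<forall>n\<ge>N + 1. \<forall>s\<in>Sset. \<forall>i. \<bar>eps2 P i (genFn P (n - 1) s)\<bar> / calQ P (n - 1) s \<le> e"
    using \<open>0 < e\<close> by (auto simp: Sset_def intro!: abs_divide_le_if_le_mult calQ_nonneg)
  then show "\<exists>N. \<forall>n\<ge>N. \<forall>s\<in>Sset. \<forall>i. \<bar>eps2 P i (genFn P (n - 1) s)\<bar> / calQ P (n - 1) s \<le> e"
    by blast
qed

end
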